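(* Let $S_1,\dots,S_N$ be pairwise disjoint finite sets of variables, $S=\bigcup_iS_i$, and $\mu\in\mathcal{D}(\mathrm{Mem}[S])$. Then $S_1,\dots,S_N$ are mutually independent in $\mu$, i.e. $\mu(x)=\prod_{i=1}^N\pi_{S_i}\mu(p_{S_i}x)$ for all $x\in\mathrm{Mem}[S]$, if and only if for every family of functions $f_i:\mathrm{Mem}[S_i]\to[0,\infty)$ ($1\le i\le N$) that are all monotone or all antitone, $\mathbb{E}_{x\sim\mu}[\prod_{i}f_i(p_{S_i}x)]=\prod_i\mathbb{E}_{x\sim\mu}[f_i(p_{S_i}x)]$.
   Context: Values are real numbers; for finite $S$, $\mathrm{Mem}[S]$ is the set of maps $S\to\mathbb{R}$ with the pointwise order; $p_A$ denotes restriction to $A$; $\mathcal{D}(\cdot)$ denotes countably supported probability distributions; $\pi_A\mu$ is the marginal of $\mu$ on $A$. Monotone means non-decreasing and antitone means non-increasing in the pointwise order. *)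

theory Defs
  imports "HOL-Probability.Probability"
begin

text \<open>Memories over a finite set of variables S: maps S -> real, represented
  extensionally (value undefined outside S).\<close>
definition Mem :: "'v set \<Rightarrow> ('v \<Rightarrow> real) set" where
  "Mem S = S \<rightarrow>\<^sub>E (UNIV :: real set)"

definition proj :: "'v set \<Rightarrow> ('v \<Rightarrow> real) \<Rightarrow> ('v \<Rightarrow> real)" where
  "proj A x = restrict x A"

definition marginal :: "'v set \<Rightarrow> ('v \<Rightarrow> real) pmf \<Rightarrow> ('v \<Rightarrow> real) pmf" where
  "marginal A \<mu> = map_pmf (proj A) \<mu>"

definition mem_le :: "'v set \<Rightarrow> ('v \<Rightarrow> real) \<Rightarrow> ('v \<Rightarrow> real) \<Rightarrow> bool" where
  "mem_le S m m' \<longleftrightarrow> (\<forall>v\<in>S. m v \<le> m' v)"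

definition monotone_mem :: "'v set \<Rightarrow> (('v \<Rightarrow> real) \<Rightarrow> real) \<Rightarrow> bool" where
  "monotone_mem S f \<longleftrightarrow> (\<forall>m\<in>Mem S. \<forall>m'\<in>Mem S. mem_le S m m' \<longrightarrow> f m \<le> f m')"

definition antitone_mem :: "'v set \<Rightarrow> (('v \<Rightarrow> real) \<Rightarrow> real) \<Rightarrow> bool" where
  "antitone_mem S f \<longleftrightarrow> (\<forall>m\<in>Mem S. \<forall>m'\<in>Mem S. mem_le S m m' \<longrightarrow> f m' \<le> f m)"

definition mutually_independent :: "nat \<Rightarrow> (nat \<Rightarrow> 'v set) \<Rightarrow> ('v \<Rightarrow> real) pmf \<Rightarrow> bool" where
  "mutually_independent N Ss \<mu> \<longleftrightarrow>
     (\<forall>x\<in>Mem (\<Union>i<N. Ss i).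
        pmf \<mu> x = (\<Prod>i<N. pmf (marginal (Ss i) \<mu>) (proj (Ss i) x)))"

end

theory Submission
  imports Defs
begin

text \<open>
  If the S_i are independent, the joint law of the restrictions (p_{S_i} x)_i agrees with the
  product of the marginals on its own support, which already carries all the mass; hence the two
  laws coincide and expectations of products factor, for any nonnegative f_i.

  Conversely, only monotone f_i are needed. Indicators of up-closed sets of memories show that
  the probability of a conjunction of up-closed events factors. Factorization is preserved when one
  coordinate's event U is replaced by U - V with V \<subseteq> U, and every singleton {a} is the difference
  of the up-set of a and that up-set with a removed. Replacing the coordinates one by one yields the
  product formula for singletons, i.e. mutual independence.
\<close>

lemma prod_of_bool:
  "finite A \<Longrightarrow> (\<Prod>x\<in>A. of_bool (P x) :: 'a :: comm_semiring_1) = of_bool (\<forall>x\<in>A. P x)"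
  by (induction A rule: finite_induct) auto

lemma pmf_eq_if_eq_on_set_pmf:
  assumes "\<And>x. x \<in> set_pmf p \<Longrightarrow> pmf q x = pmf p x"
  shows "q = p"
proof (rule pmf_eqI)
  fix x
  have "measure q (set_pmf p) = measure p (set_pmf p)"
    using assms by (simp add: measure_pmf_conv_infsetsum)
  also have "\<dots> = 1"
    using measure_Int_set_pmf[of p UNIV] by simp
  finally have "measure q (UNIV - set_pmf p) = 0"
    using measure_pmf.prob_compl[of "set_pmf p" q] by simp
  moreover have "x \<notin> set_pmf p \<Longrightarrow> pmf q x \<le> measure q (UNIV - set_pmf p)"
    unfolding measure_pmf_single[symmetric] by (rule measure_pmf.finite_measure_mono) auto
  ultimately show "pmf q x = pmf p x"
    using assms pmf_nonneg[of q x] by (cases "x \<in> set_pmf p") (auto simp: set_pmf_eq)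
qed

definition factorizes :: "'a pmf \<Rightarrow> nat \<Rightarrow> (nat \<Rightarrow> 'a \<Rightarrow> 'b) \<Rightarrow> (nat \<Rightarrow> 'b set) \<Rightarrow> bool" where
  "factorizes \<mu> N X A \<longleftrightarrow>
     measure \<mu> {x. \<forall>i<N. X i x \<in> A i} = (\<Prod>i<N. measure \<mu> {x. X i x \<in> A i})"

lemma factorizes_fun_upd_Diff:
  assumes k: "k < N" and "V \<subseteq> U"
    and U: "factorizes \<mu> N X (A(k := U))" and V: "factorizes \<mu> N X (A(k := V))"
  shows "factorizes \<mu> N X (A(k := U - V))"
proof -
  let ?E = "\<lambda>B. {x. \<forall>i<N. X i x \<in> B i}"
  let ?c = "\<lambda>W. measure \<mu> {x. X k x \<in> W}"
  let ?R = "\<Prod>i\<in>{..<N} - {k}. measure \<mu> {x. X i x \<in> A i}"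
  have prod: "(\<Prod>i<N. measure \<mu> {x. X i x \<in> (A(k := W)) i}) = ?c W * ?R" for W
    using k by (subst prod.remove[of _ k]) (auto intro!: prod.cong)
  have "?E (A(k := U - V)) = ?E (A(k := U)) - ?E (A(k := V))"
    using k \<open>V \<subseteq> U\<close> by (auto split: if_splits)
  moreover have "?E (A(k := V)) \<subseteq> ?E (A(k := U))"
    using \<open>V \<subseteq> U\<close> by auto
  ultimately have "measure \<mu> (?E (A(k := U - V)))
      = measure \<mu> (?E (A(k := U))) - measure \<mu> (?E (A(k := V)))"
    by (simp add: measure_pmf.finite_measure_Diff)
  also have "\<dots> = (?c U - ?c V) * ?R"
    using U V unfolding factorizes_def prod by (simp add: algebra_simps)
  also have "?c U - ?c V = ?c (U - V)"
  proof -
    have "{x. X k x \<in> U - V} = {x. X k x \<in> U} - {x. X k x \<in> V}"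
      by auto
    moreover have "{x. X k x \<in> V} \<subseteq> {x. X k x \<in> U}"
      using \<open>V \<subseteq> U\<close> by auto
    ultimately show ?thesis
      by (simp add: measure_pmf.finite_measure_Diff)
  qed
  finally show ?thesis
    unfolding factorizes_def prod .
qed

lemma factorizes_Diff_family:
  assumes fact: "\<And>A. \<forall>i<N. A i \<in> \<U> i \<Longrightarrow> factorizes \<mu> N X A"
    and A: "\<forall>i<N. \<exists>U\<in>\<U> i. \<exists>V\<in>\<U> i. V \<subseteq> U \<and> A i = U - V"
  shows "factorizes \<mu> N X A"
proof -
  have "\<forall>A. (\<forall>i<N. if i < k then \<exists>U\<in>\<U> i. \<exists>V\<in>\<U> i. V \<subseteq> U \<and> A i = U - V else A i \<in> \<U> i)
          \<longrightarrow> factorizes \<mu> N X A" for k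
  proof (induction k)
    case 0
    then show ?case using fact by simp
  next
    case (Suc k)
    show ?case
    proof (intro allI impI)
      fix A assume A: "\<forall>i<N. if i < Suc k then \<exists>U\<in>\<U> i. \<exists>V\<in>\<U> i. V \<subseteq> U \<and> A i = U - V
                            else A i \<in> \<U> i"
      show "factorizes \<mu> N X A"
      proof (cases "k < N")
        case True
        then obtain U V where "U \<in> \<U> k" "V \<in> \<U> k" "V \<subseteq> U" "A k = U - V"
          using A lessI by meson
        with Suc.IH A have "factorizes \<mu> N X (A(k := U))" "factorizes \<mu> N X (A(k := V))"
          by (auto simp: less_Suc_eq)
        with True \<open>V \<subseteq> U\<close> \<open>A k = U - V\<close> show ?thesis
          using factorizes_fun_upd_Diff[of k N V U \<mu> X A] by (simp add: fun_upd_idem)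
      next
        case False
        with Suc.IH A show ?thesis by (auto simp: less_Suc_eq)
      qed
    qed
  qed
  from this[of N] A show ?thesis by auto
qed

lemma proj_in_Mem [simp]: "proj A x \<in> Mem A"
  unfolding proj_def Mem_def by simp

lemma Mem_UN_eqI:
  assumes "x \<in> Mem (\<Union>i\<in>I. S i)" "y \<in> Mem (\<Union>i\<in>I. S i)"
    and "\<And>i. i \<in> I \<Longrightarrow> proj (S i) x = proj (S i) y"
  shows "x = y"
proof (rule PiE_ext[OF assms(1,2)[unfolded Mem_def]])
  fix v assume "v \<in> (\<Union>i\<in>I. S i)"
  then obtain i where "i \<in> I" "v \<in> S i" by blast
  then show "x v = y v"
    using fun_cong[OF assms(3), of i v] by (simp add: proj_def)
qed

lemma mem_le_antisym:
  assumes "m \<in> Mem S" "m' \<in> Mem S" "mem_le S m m'" "mem_le S m' m"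
  shows "m = m'"
  using assms(1,2) unfolding Mem_def
proof (rule PiE_ext)
  show "m v = m' v" if "v \<in> S" for v
    using assms(3,4) that unfolding mem_le_def by (simp add: order_antisym)
qed

definition upclosed :: "'v set \<Rightarrow> ('v \<Rightarrow> real) set \<Rightarrow> bool" where
  "upclosed S A \<longleftrightarrow> (\<forall>m\<in>A. \<forall>m'\<in>Mem S. mem_le S m m' \<longrightarrow> m' \<in> A)"

lemma monotone_mem_indicator: "upclosed S A \<Longrightarrow> monotone_mem S (indicator A)"
  unfolding upclosed_def monotone_mem_def by (auto simp: indicator_def)

lemma singleton_eq_upclosed_Diff:
  assumes "a \<in> Mem S"
  shows "\<exists>U V. upclosed S U \<and> upclosed S V \<and> V \<subseteq> U \<and> {a} = U - V"
proof (intro exI conjI)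
  define U where "U = {m \<in> Mem S. mem_le S a m}"
  show "upclosed S U"
    unfolding upclosed_def U_def mem_le_def by (auto intro: order_trans)
  show "upclosed S (U - {a})"
    unfolding upclosed_def
  proof (intro ballI impI)
    fix m m' assume m: "m \<in> U - {a}" and m': "m' \<in> Mem S" "mem_le S m m'"
    then have "m' \<in> U"
      using \<open>upclosed S U\<close> unfolding upclosed_def by blast
    moreover have "m' \<noteq> a"
    proof
      assume "m' = a"
      with m m' have "m = a"
        unfolding U_def by (blast intro: mem_le_antisym)
      with m show False
        by blast
    qed
    ultimately show "m' \<in> U - {a}"
      by blast
  qed
  show "{a} = U - (U - {a})"
    using assms unfolding U_def mem_le_def by auto
qed auto

lemma map_pmf_proj_eq_Pi_pmf:
  assumes supp: "set_pmf \<mu> \<subseteq> Mem (\<Union>i<N. Ss i)"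
    and ind: "mutually_independent N Ss \<mu>"
  shows "map_pmf (\<lambda>x. restrict (\<lambda>i. proj (Ss i) x) {..<N}) \<mu>
       = Pi_pmf {..<N} undefined (\<lambda>i. marginal (Ss i) \<mu>)"
    (is "map_pmf ?P \<mu> = ?\<Pi>")
proof (rule pmf_eq_if_eq_on_set_pmf[symmetric])
  have inj: "inj_on ?P (set_pmf \<mu>)"
  proof (rule inj_onI)
    fix x y assume "x \<in> set_pmf \<mu>" "y \<in> set_pmf \<mu>" and eq: "?P x = ?P y"
    then have "x \<in> Mem (\<Union>i<N. Ss i)" "y \<in> Mem (\<Union>i<N. Ss i)"
      using supp by blast+
    then show "x = y"
    proof (rule Mem_UN_eqI)
      show "proj (Ss i) x = proj (Ss i) y" if "i \<in> {..<N}" for i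
        using fun_cong[OF eq, of i] that by simp
    qed
  qed
  fix g assume "g \<in> set_pmf (map_pmf ?P \<mu>)"
  then obtain x where x: "x \<in> set_pmf \<mu>" and g: "g = ?P x" by auto
  have "pmf (map_pmf ?P \<mu>) g = pmf \<mu> x"
    unfolding g using inj x by (rule pmf_map_inj)
  also have "\<dots> = (\<Prod>i<N. pmf (marginal (Ss i) \<mu>) (proj (Ss i) x))"
    using ind x supp unfolding mutually_independent_def by blast
  also have "\<dots> = pmf ?\<Pi> g"
    unfolding g by (simp add: pmf_Pi)
  finally show "pmf ?\<Pi> g = pmf (map_pmf ?P \<mu>) g" ..
qed

lemma nn_integral_prod_proj_eq_prod:
  assumes supp: "set_pmf \<mu> \<subseteq> Mem (\<Union>i<N. Ss i)"
    and ind: "mutually_independent N Ss \<mu>"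
    and nonneg: "\<forall>i<N. \<forall>m\<in>Mem (Ss i). 0 \<le> f i m"
  shows "(\<integral>\<^sup>+ x. ennreal (\<Prod>i<N. f i (proj (Ss i) x)) \<partial>measure_pmf \<mu>) =
         (\<Prod>i<N. \<integral>\<^sup>+ x. ennreal (f i (proj (Ss i) x)) \<partial>measure_pmf \<mu>)"
proof -
  let ?P = "\<lambda>x. restrict (\<lambda>i. proj (Ss i) x) {..<N}"
  have "(\<integral>\<^sup>+ x. ennreal (\<Prod>i<N. f i (proj (Ss i) x)) \<partial>measure_pmf \<mu>)
      = (\<integral>\<^sup>+ x. (\<Prod>i<N. ennreal (f i (?P x i))) \<partial>measure_pmf \<mu>)"
    using nonneg by (intro nn_integral_cong) (subst prod_ennreal, auto)
  also have "\<dots> = (\<integral>\<^sup>+ y. (\<Prod>i<N. ennreal (f i (y i))) \<partial>measure_pmf (map_pmf ?P \<mu>))"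
    by simp
  also have "\<dots> = (\<Prod>i<N. \<integral>\<^sup>+ m. ennreal (f i m) \<partial>measure_pmf (marginal (Ss i) \<mu>))"
    unfolding map_pmf_proj_eq_Pi_pmf[OF supp ind] by (rule nn_integral_prod_Pi_pmf) simp
  finally show ?thesis
    by (simp add: marginal_def)
qed

lemma factorizes_if_monotone_nn_integral_prod:
  assumes mono: "\<And>f. \<forall>i<N. \<forall>m\<in>Mem (Ss i). 0 \<le> f i m \<Longrightarrow> \<forall>i<N. monotone_mem (Ss i) (f i) \<Longrightarrow>
       (\<integral>\<^sup>+ x. ennreal (\<Prod>i<N. f i (proj (Ss i) x)) \<partial>measure_pmf \<mu>) =
       (\<Prod>i<N. \<integral>\<^sup>+ x. ennreal (f i (proj (Ss i) x)) \<partial>measure_pmf \<mu>)"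
    and up: "\<forall>i<N. upclosed (Ss i) (A i)"
  shows "factorizes \<mu> N (\<lambda>i. proj (Ss i)) A"
proof -
  let ?E = "{x. \<forall>i<N. proj (Ss i) x \<in> A i}"
  have "ennreal (\<Prod>i<N. indicator (A i) (proj (Ss i) x)) = indicator ?E x" for x
    by (auto simp: indicator_def prod_of_bool)
  then have "ennreal (measure \<mu> ?E)
      = (\<integral>\<^sup>+ x. ennreal (\<Prod>i<N. indicator (A i) (proj (Ss i) x)) \<partial>measure_pmf \<mu>)"
    by (simp add: measure_pmf.emeasure_eq_measure)
  also have "\<dots> = (\<Prod>i<N. \<integral>\<^sup>+ x. ennreal (indicator (A i) (proj (Ss i) x)) \<partial>measure_pmf \<mu>)"
    using up by (intro mono) (auto simp: monotone_mem_indicator)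
  also have "\<dots> = (\<Prod>i<N. ennreal (measure \<mu> {x. proj (Ss i) x \<in> A i}))"
  proof -
    have "ennreal (indicator (A i) (proj (Ss i) x)) = indicator {x. proj (Ss i) x \<in> A i} x" for i x
      by (simp add: indicator_def)
    then show ?thesis
      by (simp add: measure_pmf.emeasure_eq_measure)
  qed
  finally show ?thesis
    unfolding factorizes_def by (simp add: prod_ennreal prod_nonneg)
qed

lemma mutually_independent_if_upclosed_factorizes:
  assumes supp: "set_pmf \<mu> \<subseteq> Mem (\<Union>i<N. Ss i)"
    and up: "\<And>A. \<forall>i<N. upclosed (Ss i) (A i) \<Longrightarrow> factorizes \<mu> N (\<lambda>i. proj (Ss i)) A"
  shows "mutually_independent N Ss \<mu>"
  unfolding mutually_independent_def
proof
  fix x assume x: "x \<in> Mem (\<Union>i<N. Ss i)"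
  have singletons_factorize: "factorizes \<mu> N (\<lambda>i. proj (Ss i)) (\<lambda>i. {proj (Ss i) x})"
  proof (rule factorizes_Diff_family[where \<U> = "\<lambda>i. Collect (upclosed (Ss i))"])
    fix A assume "\<forall>i<N. A i \<in> Collect (upclosed (Ss i))"
    then show "factorizes \<mu> N (\<lambda>i. proj (Ss i)) A"
      by (intro up) simp
  next
    show "\<forall>i<N. \<exists>U\<in>Collect (upclosed (Ss i)). \<exists>V\<in>Collect (upclosed (Ss i)).
            V \<subseteq> U \<and> {proj (Ss i) x} = U - V"
      by (meson singleton_eq_upclosed_Diff proj_in_Mem mem_Collect_eq)
  qed
  let ?E = "{y. \<forall>i<N. proj (Ss i) y \<in> {proj (Ss i) x}}"
  have E: "?E \<inter> set_pmf \<mu> = {x} \<inter> set_pmf \<mu>"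
  proof (intro equalityI subsetI)
    fix y assume y: "y \<in> ?E \<inter> set_pmf \<mu>"
    then have "y \<in> Mem (\<Union>i<N. Ss i)"
      using supp by blast
    then have "y = x"
      using x by (rule Mem_UN_eqI) (use y in auto)
    with y show "y \<in> {x} \<inter> set_pmf \<mu>"
      by blast
  qed auto
  have "pmf \<mu> x = measure \<mu> ({x} \<inter> set_pmf \<mu>)"
    by (simp only: measure_Int_set_pmf measure_pmf_single)
  also have "\<dots> = measure \<mu> ?E"
    by (simp only: E[symmetric] measure_Int_set_pmf)
  also have "\<dots> = (\<Prod>i<N. measure \<mu> {y. proj (Ss i) y \<in> {proj (Ss i) x}})"
    using singletons_factorize unfolding factorizes_def .
  also have "\<dots> = (\<Prod>i<N. pmf (marginal (Ss i) \<mu>) (proj (Ss i) x))"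
    by (simp add: marginal_def pmf_map vimage_def)
  finally show "pmf \<mu> x = (\<Prod>i<N. pmf (marginal (Ss i) \<mu>) (proj (Ss i) x))" .
qed

theorem mainTheorem15:
  fixes N :: nat and Ss :: "nat \<Rightarrow> 'v set" and \<mu> :: "('v \<Rightarrow> real) pmf"
  assumes fin: "\<And>i. i < N \<Longrightarrow> finite (Ss i)"
    and disj: "\<And>i j. i < N \<Longrightarrow> j < N \<Longrightarrow> i \<noteq> j \<Longrightarrow> Ss i \<inter> Ss j = {}"
    and supp: "set_pmf \<mu> \<subseteq> Mem (\<Union>i<N. Ss i)"
  shows "mutually_independent N Ss \<mu> \<longleftrightarrow>
    (\<forall>f :: nat \<Rightarrow> ('v \<Rightarrow> real) \<Rightarrow> real.
       (\<forall>i<N. \<forall>m\<in>Mem (Ss i). 0 \<le> f i m) \<longrightarrow>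
       ((\<forall>i<N. monotone_mem (Ss i) (f i)) \<or> (\<forall>i<N. antitone_mem (Ss i) (f i))) \<longrightarrow>
       (\<integral>\<^sup>+ x. ennreal (\<Prod>i<N. f i (proj (Ss i) x)) \<partial>measure_pmf \<mu>) =
       (\<Prod>i<N. \<integral>\<^sup>+ x. ennreal (f i (proj (Ss i) x)) \<partial>measure_pmf \<mu>))"
    (is "_ \<longleftrightarrow> ?products_factor")
proof
  assume "mutually_independent N Ss \<mu>"
  with supp show ?products_factor
    by (simp add: nn_integral_prod_proj_eq_prod)
next
  assume ?products_factor
  show "mutually_independent N Ss \<mu>"
    using supp
  proof (rule mutually_independent_if_upclosed_factorizes)
    fix A assume "\<forall>i<N. upclosed (Ss i) (A i)"
    then show "factorizes \<mu> N (\<lambda>i. proj (Ss i)) A"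
      by (rule factorizes_if_monotone_nn_integral_prod[rotated]) (use \<open>?products_factor\<close> in simp)
  qed
qed

end
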